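(* Let $n\ge2$ and $q\ge1$ be integers and $\beta>0$, $J>0$, $H\in\mathbb{R}$. For $\pi\in S_3$ let $\mathrm{CDdes}(\pi)=\mathrm{des}(\pi)+\mathrm{des}(\pi^{-1})$, where $\mathrm{des}(\pi)$ is the number of $i\in\{1,2\}$ with $\pi(i)>\pi(i+1)$, and put $\phi(\alpha,\sigma)=1-\tfrac12\mathrm{CDdes}(\alpha^{-1}\sigma)$. For $\vec\pi=(\pi^{(1)},\ldots,\pi^{(n)})\in S_3^n$ define the mean-field Hamiltonian $$\mathcal{H}^{(mean)}(\vec\pi)=-\frac{qJ}{n-1}\sum_{1\le i<j\le n}\phi(\pi^{(i)},\pi^{(j)})-H\sum_{i=1}^n\phi(\pi^{(i)},\mathrm{id}),$$ and $Z_n(\beta)=\sum_{\vec\pi\in S_3^n}\exp(-\beta\mathcal{H}^{(mean)}(\vec\pi))$. Then $$Z_n(\beta)=e^{-\frac{\beta}{2}\left(\frac{nqJ}{n-1}+\frac{H^2(n-1)}{qJ}\right)}\sum_{a+b+c=n}\binom{n}{a,b,c}\,G_a\!\left(\tfrac{H(n-1)}{qJ};e^{\frac{\beta qJ}{2(n-1)}}\right)G_b\!\left(0;e^{\frac{\beta qJ}{2(n-1)}}\right)G_c\!\left(0;e^{\frac{\beta qJ}{2(n-1)}}\right),$$ where the sum is over nonnegative integers $a,b,c$ and $$G_m(\ell;x):=\sum_{i+j=m}\binom{m}{i}x^{(i-j+\ell)^2}=\sum_{i=0}^{m}\binom{m}{i}x^{(2i-m+\ell)^2}.$$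
   Context: Permutations of $\{1,2,3\}$ are composed as functions, $(\alpha^{-1}\sigma)(x)=\alpha^{-1}(\sigma(x))$; $\mathrm{id}=123$. $\binom{n}{a,b,c}$ denotes the multinomial coefficient. *)

theory Defs
  imports "HOL-Combinatorics.Combinatorics" Complex_Main
begin

definition S3 :: "(nat \<Rightarrow> nat) set" where
  "S3 = {p. p permutes {1,2,3}}"

definition des :: "(nat \<Rightarrow> nat) \<Rightarrow> nat" where
  "des p = card {i \<in> {1,2}. p i > p (Suc i)}"

definition CDdes :: "(nat \<Rightarrow> nat) \<Rightarrow> nat" where
  "CDdes p = des p + des (inv p)"

definition phi :: "(nat \<Rightarrow> nat) \<Rightarrow> (nat \<Rightarrow> nat) \<Rightarrow> real" where
  "phi \<alpha> \<sigma> = 1 - real (CDdes (inv \<alpha> \<circ> \<sigma>)) / 2"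

definition H_mean :: "nat \<Rightarrow> nat \<Rightarrow> real \<Rightarrow> real \<Rightarrow> (nat \<Rightarrow> nat \<Rightarrow> nat) \<Rightarrow> real" where
  "H_mean n q J H P =
     - (real q * J / (real n - 1)) * (\<Sum>(i,j) \<in> {(i,j). 1 \<le> i \<and> i < j \<and> j \<le> n}. phi (P i) (P j))
     - H * (\<Sum>i=1..n. phi (P i) id)"

definition Z :: "nat \<Rightarrow> nat \<Rightarrow> real \<Rightarrow> real \<Rightarrow> real \<Rightarrow> real" where
  "Z n q J H \<beta> = (\<Sum>P \<in> PiE {1..n} (\<lambda>_. S3). exp (- \<beta> * H_mean n q J H P))"

definition multinom3 :: "nat \<Rightarrow> nat \<Rightarrow> nat \<Rightarrow> nat \<Rightarrow> real" where
  "multinom3 n a b c = fact n / (fact a * fact b * fact c)"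

definition G :: "nat \<Rightarrow> real \<Rightarrow> real \<Rightarrow> real" where
  "G m l x = (\<Sum>i=0..m. real (m choose i) * x powr ((2 * real i - real m + l)^2))"

end

theory Submission
  imports Defs
begin

(*
  Send pi in S_3 to the signed unit vector +-e_k of Z^3 with k = pi(2), the sign being + iff
  pi(1) < pi(3).  A check of the 36 cases shows that phi(alpha, sigma) is the inner product of
  the vectors of alpha and sigma, so phi(alpha, id) is the e_2-coordinate of alpha.  With X the
  total spin (the sum of the n vectors) the pair sum is (|X|^2 - n)/2, and completing the square
  in X_2 turns the Boltzmann weight into a constant times x^((X_2 + l)^2) x^(X_1^2) x^(X_3^2).
  Summing over configurations means choosing which a, b, c sites point along e_2, e_1, e_3
  (the multinomial coefficient) and then their signs independently, which gives the sums G.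
*)

definition perm3 :: "nat \<Rightarrow> nat \<Rightarrow> nat \<Rightarrow> nat \<Rightarrow> nat" where
  "perm3 a b c x = (if x = 1 then a else if x = 2 then b else if x = 3 then c else x)"

lemma perm3_eq_iff: "perm3 a b c = perm3 a' b' c' \<longleftrightarrow> a = a' \<and> b = b' \<and> c = c'"
proof
  assume h: "perm3 a b c = perm3 a' b' c'"
  from fun_cong[OF h, of 1] fun_cong[OF h, of 2] fun_cong[OF h, of 3]
  show "a = a' \<and> b = b' \<and> c = c'" by (simp add: perm3_def)
qed simp

lemma perm3_in_S3:
  assumes "a \<in> {1,2,3}" "b \<in> {1,2,3}" "c \<in> {1,2,3}" "a \<noteq> b" "a \<noteq> c" "b \<noteq> c"
  shows "perm3 a b c \<in> S3"
  unfolding S3_def mem_Collect_eq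
proof (rule bij_imp_permutes)
  have "inj_on (perm3 a b c) {1,2,3}" using assms by (auto simp: inj_on_def perm3_def)
  moreover have "perm3 a b c ` {1,2,3} = {1,2,3}" using assms by (auto simp: perm3_def)
  ultimately show "bij_betw (perm3 a b c) {1,2,3} {1,2,3}" by (simp add: bij_betw_def)
qed (simp add: perm3_def)

lemma S3_explicit:
  "S3 = {perm3 1 2 3, perm3 1 3 2, perm3 2 1 3, perm3 2 3 1, perm3 3 1 2, perm3 3 2 1}"
proof
  show "S3 \<subseteq> {perm3 1 2 3, perm3 1 3 2, perm3 2 1 3, perm3 2 3 1, perm3 3 1 2, perm3 3 2 1}"
  proof
    fix p assume "p \<in> S3"
    hence p: "p permutes {1,2,3}" by (simp add: S3_def)
    have "p = perm3 (p 1) (p 2) (p 3)"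
      using p by (auto simp: fun_eq_iff perm3_def permutes_def)
    moreover have "p 1 \<in> {1,2,3}" "p 2 \<in> {1,2,3}" "p 3 \<in> {1,2,3}"
      using permutes_in_image[OF p] by simp_all
    moreover have "p 1 \<noteq> p 2" "p 1 \<noteq> p 3" "p 2 \<noteq> p 3"
      using inj_eq[OF permutes_inj[OF p]] by simp_all
    ultimately show "p \<in> {perm3 1 2 3, perm3 1 3 2, perm3 2 1 3, perm3 2 3 1, perm3 3 1 2, perm3 3 2 1}"
      unfolding insert_iff empty_iff by (elim disjE) simp_all
  qed
qed (simp add: perm3_in_S3)

lemma S3_inv_perm3:
  "inv (perm3 1 2 3) = perm3 1 2 3" "inv (perm3 1 3 2) = perm3 1 3 2"
  "inv (perm3 2 1 3) = perm3 2 1 3" "inv (perm3 2 3 1) = perm3 3 1 2"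
  "inv (perm3 3 1 2) = perm3 2 3 1" "inv (perm3 3 2 1) = perm3 3 2 1"
  by (rule inv_unique_comp; auto simp: fun_eq_iff perm3_def)+

lemma des_eq: "des p = of_bool (p 2 < p 1) + of_bool (p 3 < p 2)"
proof -
  have "{i \<in> {1,2}. p (Suc i) < p i} =
      (if p 2 < p 1 then {1} else {}) \<union> (if p 3 < p 2 then {2} else {})"
    by (auto simp: numeral_2_eq_2 numeral_3_eq_3)
  thus ?thesis unfolding des_def by auto
qed

definition end_sign :: "(nat \<Rightarrow> nat) \<Rightarrow> int" where
  "end_sign p = (if p 1 < p 3 then 1 else -1)"

definition spin :: "(nat \<Rightarrow> nat) \<Rightarrow> nat \<Rightarrow> int" where
  "spin p k = (if p 2 = k then end_sign p else 0)"

lemma phi_eq_spin_inner: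
  assumes "\<alpha> \<in> S3" "\<sigma> \<in> S3"
  shows "phi \<alpha> \<sigma> = of_int (\<Sum>k\<in>{1,2,3}. spin \<alpha> k * spin \<sigma> k)"
proof -
  have "bij \<alpha>" "bij \<sigma>" using assms permutes_bij by (auto simp: S3_def)
  hence "CDdes (inv \<alpha> \<circ> \<sigma>) = des (inv \<alpha> \<circ> \<sigma>) + des (inv \<sigma> \<circ> \<alpha>)"
    by (simp add: CDdes_def o_inv_distrib bij_imp_bij_inv inv_inv_eq)
  with assms show ?thesis
    unfolding phi_def S3_explicit insert_iff empty_iff
    by (elim disjE FalseE; hypsubst; simp only: S3_inv_perm3 des_eq comp_apply;
        simp add: perm3_def spin_def end_sign_def)
qed

lemma spin_norm: "\<alpha> \<in> S3 \<Longrightarrow> (\<Sum>k\<in>{1,2,3}. (spin \<alpha> k)^2) = 1"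
  unfolding S3_explicit insert_iff empty_iff
  by (elim disjE FalseE; hypsubst; simp add: perm3_def spin_def end_sign_def)

lemma phi_id_eq_spin: "\<alpha> \<in> S3 \<Longrightarrow> phi \<alpha> id = of_int (spin \<alpha> 2)"
proof -
  have "id = perm3 1 2 3" by (auto simp: fun_eq_iff perm3_def)
  moreover have "perm3 1 2 3 \<in> S3" by (simp add: perm3_in_S3)
  moreover assume "\<alpha> \<in> S3"
  ultimately show ?thesis by (simp add: phi_eq_spin_inner) (simp add: spin_def end_sign_def perm3_def)
qed

lemma sum_S3_spin:
  fixes F :: "int \<Rightarrow> int \<Rightarrow> int \<Rightarrow> 'a :: comm_monoid_add"
  shows "(\<Sum>s\<in>S3. F (spin s 2) (spin s 1) (spin s 3)) =
    F 1 0 0 + F (-1) 0 0 + F 0 1 0 + F 0 (-1) 0 + F 0 0 1 + F 0 0 (-1)"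
  by (simp add: S3_explicit perm3_eq_iff spin_def end_sign_def perm3_def ac_simps)

definition total_spin :: "(nat \<Rightarrow> nat \<Rightarrow> nat) \<Rightarrow> nat \<Rightarrow> nat \<Rightarrow> int" where
  "total_spin P n k = (\<Sum>i=1..n. spin (P i) k)"

lemma sum_pairs_product:
  fixes a :: "nat \<Rightarrow> 'a :: comm_ring_1"
  shows "2 * (\<Sum>(i,j)\<in>{(i,j). 1 \<le> i \<and> i < j \<and> j \<le> n}. a i * a j)
         = (\<Sum>i=1..n. a i)^2 - (\<Sum>i=1..n. (a i)^2)"
proof (induction n)
  case 0
  have "{(i,j). 1 \<le> i \<and> i < j \<and> j \<le> (0::nat)} = {}" by auto
  then show ?case by (simp only:) simp
next
  case (Suc n)
  have fin: "finite {(i,j). 1 \<le> i \<and> i < j \<and> j \<le> n}"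
    by (rule finite_subset[of _ "{1..n} \<times> {1..n}"]) auto
  have split: "{(i,j). 1 \<le> i \<and> i < j \<and> j \<le> Suc n} =
      {(i,j). 1 \<le> i \<and> i < j \<and> j \<le> n} \<union> (\<lambda>i. (i, Suc n)) ` {1..n}"
    by auto
  have "(\<Sum>(i,j)\<in>{(i,j). 1 \<le> i \<and> i < j \<and> j \<le> Suc n}. a i * a j)
      = (\<Sum>(i,j)\<in>{(i,j). 1 \<le> i \<and> i < j \<and> j \<le> n}. a i * a j) + (\<Sum>i=1..n. a i * a (Suc n))"
    unfolding split by (subst sum.union_disjoint[OF fin]) (auto simp: sum.reindex inj_on_def)
  then show ?case using Suc.IH
    by (simp add: power2_eq_square algebra_simps sum_distrib_left sum_distrib_right)
qed

lemma H_mean_eq_total_spin: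
  assumes "P \<in> PiE {1..n} (\<lambda>_. S3)"
  shows "H_mean n q J H P =
    - (real q * J / (real n - 1)) * (((\<Sum>k\<in>{1,2,3}. (real_of_int (total_spin P n k))^2) - real n) / 2)
    - H * real_of_int (total_spin P n 2)"
proof -
  define pairs where "pairs = {(i,j). 1 \<le> i \<and> i < j \<and> (j::nat) \<le> n}"
  define s where "s i k = real_of_int (spin (P i) k)" for i k
  have S3: "P i \<in> S3" if "i \<in> {1..n}" for i using assms that by auto
  have "(\<Sum>(i,j)\<in>pairs. phi (P i) (P j)) = (\<Sum>k\<in>{1,2,3}. \<Sum>(i,j)\<in>pairs. s i k * s j k)"
    by (subst sum.swap) (auto simp: pairs_def s_def phi_eq_spin_inner S3 intro!: sum.cong)
  also have "\<dots> = (\<Sum>k\<in>{1,2,3}. ((\<Sum>i=1..n. s i k)^2 - (\<Sum>i=1..n. (s i k)^2)) / 2)"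
  proof (intro sum.cong refl)
    fix k
    show "(\<Sum>(i,j)\<in>pairs. s i k * s j k) = ((\<Sum>i=1..n. s i k)^2 - (\<Sum>i=1..n. (s i k)^2)) / 2"
      using sum_pairs_product[of "\<lambda>i. s i k" n] by (simp add: pairs_def)
  qed
  also have "\<dots> = ((\<Sum>k\<in>{1,2,3}. (\<Sum>i=1..n. s i k)^2) - (\<Sum>k\<in>{1,2,3}. \<Sum>i=1..n. (s i k)^2)) / 2"
    by (simp only: diff_divide_distrib sum_subtractf sum_divide_distrib)
  also have "\<dots> = ((\<Sum>k\<in>{1,2,3}. (real_of_int (total_spin P n k))^2) - real n) / 2"
  proof -
    have norm: "(\<Sum>k\<in>{1,2,3}. (s i k)^2) = 1" if "i \<in> {1..n}" for i
      using arg_cong[OF spin_norm[OF S3[OF that]], of real_of_int] by (simp add: s_def)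
    have "(\<Sum>k\<in>{1,2,3}. \<Sum>i=1..n. (s i k)^2) = (\<Sum>i=1..n. 1)"
      by (subst sum.swap) (intro sum.cong refl norm)
    then show ?thesis by (simp add: total_spin_def s_def)
  qed
  finally have pair_sum: "(\<Sum>(i,j)\<in>pairs. phi (P i) (P j)) = \<dots>" .
  have "(\<Sum>i=1..n. phi (P i) id) = total_spin P n 2"
    by (simp add: phi_id_eq_spin S3 total_spin_def)
  then show ?thesis
    unfolding H_mean_def pair_sum[unfolded pairs_def] by simp
qed

lemma complete_square_energy:
  fixes Q m :: real
  assumes "Q \<noteq> 0" and "m \<noteq> 0"
  shows "- \<beta> * (- (Q / m) * ((X^2 + Y - N) / 2) - H * X) =
    - (\<beta> / 2) * (N * Q / m + H^2 * m / Q) + \<beta> * Q / (2 * m) * ((X + H * m / Q)^2 + Y)"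
  using assms by (simp add: field_simps power2_eq_square)

lemma exp_neg_beta_H_mean:
  fixes \<beta> J H :: real
  assumes "P \<in> PiE {1..n} (\<lambda>_. S3)" and "real n \<noteq> 1" and "real q * J \<noteq> 0"
  defines "x \<equiv> exp (\<beta> * real q * J / (2 * (real n - 1)))"
    and "l \<equiv> H * (real n - 1) / (real q * J)"
  shows "exp (- \<beta> * H_mean n q J H P) =
    exp (- (\<beta> / 2) * (real n * real q * J / (real n - 1) + H^2 * (real n - 1) / (real q * J)))
    * (x powr ((real_of_int (total_spin P n 2) + l)^2) * x powr ((real_of_int (total_spin P n 1))^2)
       * x powr ((real_of_int (total_spin P n 3))^2))"
proof -
  define K where "K = \<beta> * real q * J / (2 * (real n - 1))"
  define c0 where "c0 = - (\<beta> / 2) * (real n * real q * J / (real n - 1) + H^2 * (real n - 1) / (real q * J))"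
  define X where "X k = real_of_int (total_spin P n k)" for k
  have m: "real n - 1 \<noteq> 0" using assms(2) by simp
  have "(\<Sum>k\<in>{1,2,3}. (X k)^2) = (X 2)^2 + ((X 1)^2 + (X 3)^2)" by simp
  then have "- \<beta> * H_mean n q J H P = c0 + K * ((X 2 + l)^2 + ((X 1)^2 + (X 3)^2))"
    by (simp only: H_mean_eq_total_spin[OF assms(1), folded X_def] complete_square_energy[OF assms(3) m])
      (simp add: c0_def K_def l_def mult.assoc)
  moreover have "x powr t = exp (K * t)" for t by (simp add: x_def K_def powr_def)
  ultimately show ?thesis by (simp add: exp_add distrib_left X_def c0_def)
qed

lemma sum_PiE_insert:
  assumes "a \<notin> I"
  shows "(\<Sum>P\<in>PiE (insert a I) S. F P) = (\<Sum>s\<in>S a. \<Sum>P\<in>PiE I S. F (P(a := s)))"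
  unfolding PiE_insert_eq sum.reindex[OF inj_combinator[OF assms]]
  by (simp add: sum.cartesian_product case_prod_unfold)

lemma binomial_sum_Suc:
  fixes k :: "nat \<Rightarrow> nat \<Rightarrow> 'a :: comm_semiring_1"
  shows "(\<Sum>b\<le>Suc m. of_nat (Suc m choose b) * k b (Suc m - b)) =
    (\<Sum>b\<le>m. of_nat (m choose b) * (k (Suc b) (m - b) + k b (Suc (m - b))))"
proof -
  have "(\<Sum>b\<le>Suc m. of_nat (Suc m choose b) * k b (Suc m - b)) =
      (\<Sum>b\<le>m. of_nat (m choose b) * k (Suc b) (m - b))
        + (k 0 (Suc m) + (\<Sum>b\<le>m. of_nat (m choose Suc b) * k (Suc b) (m - b)))"
    by (subst sum.atMost_Suc_shift) (simp add: sum.distrib distrib_right add_ac)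
  also have "k 0 (Suc m) + (\<Sum>b\<le>m. of_nat (m choose Suc b) * k (Suc b) (m - b)) =
      (\<Sum>b\<le>Suc m. of_nat (m choose b) * k b (Suc m - b))"
    by (subst sum.atMost_Suc_shift) simp
  also have "\<dots> = (\<Sum>b\<le>m. of_nat (m choose b) * k b (Suc (m - b)))"
    by (simp add: Suc_diff_le binomial_eq_0)
  finally show ?thesis by (simp add: distrib_left sum.distrib)
qed

definition sign_walk_sum :: "(int \<Rightarrow> 'a :: comm_semiring_1) \<Rightarrow> nat \<Rightarrow> 'a" where
  "sign_walk_sum f m = (\<Sum>i\<le>m. of_nat (m choose i) * f (int i - int (m - i)))"

lemma sign_walk_sum_0 [simp]: "sign_walk_sum f 0 = f 0"
  by (simp add: sign_walk_sum_def)

lemma sign_walk_sum_Suc: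
  "sign_walk_sum f (Suc m) = sign_walk_sum (\<lambda>x. f (x + 1)) m + sign_walk_sum (\<lambda>x. f (x - 1)) m"
  unfolding sign_walk_sum_def binomial_sum_Suc[where k = "\<lambda>i j. f (int i - int j)"]
  by (simp add: sum.distrib algebra_simps)

(* The multinomial sum in nested binomial form, in which its Pascal recursion
   follows from the binomial one. *)

definition trinomial_sum :: "nat \<Rightarrow> (nat \<Rightarrow> nat \<Rightarrow> nat \<Rightarrow> 'a :: comm_semiring_1) \<Rightarrow> 'a" where
  "trinomial_sum n h =
    (\<Sum>a\<le>n. of_nat (n choose a) * (\<Sum>b\<le>n - a. of_nat ((n - a) choose b) * h a b (n - a - b)))"

lemma trinomial_sum_0 [simp]: "trinomial_sum 0 h = h 0 0 0"
  by (simp add: trinomial_sum_def)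

lemma trinomial_sum_add:
  "trinomial_sum n (\<lambda>a b c. h a b c + h' a b c) = trinomial_sum n h + trinomial_sum n h'"
  by (simp add: trinomial_sum_def sum.distrib distrib_left)

lemma trinomial_sum_Suc:
  "trinomial_sum (Suc n) h = trinomial_sum n (\<lambda>a b c. h (Suc a) b c + h a (Suc b) c + h a b (Suc c))"
proof -
  define g where "g a m = (\<Sum>b\<le>m. of_nat (m choose b) * h a b (m - b))" for a m
  have "trinomial_sum k h = (\<Sum>a\<le>k. of_nat (k choose a) * g a (k - a))" for k
    by (simp add: trinomial_sum_def g_def)
  then have "trinomial_sum (Suc n) h = (\<Sum>a\<le>n. of_nat (n choose a) * (g (Suc a) (n - a) + g a (Suc (n - a))))"
    by (simp only: binomial_sum_Suc)
  also have "\<dots> = trinomial_sum n (\<lambda>a b c. h (Suc a) b c + h a (Suc b) c + h a b (Suc c))"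
    unfolding trinomial_sum_def g_def binomial_sum_Suc
    by (simp add: distrib_left sum.distrib add.assoc)
  finally show ?thesis .
qed

lemma total_spin_Suc_upd:
  "total_spin (P(Suc n := s)) (Suc n) k = total_spin P n k + spin s k"
proof -
  have "(\<Sum>i=1..n. spin ((P(Suc n := s)) i) k) = total_spin P n k"
    unfolding total_spin_def by (intro sum.cong) auto
  then show ?thesis by (simp add: total_spin_def)
qed

lemma sum_PiE_S3_total_spin:
  fixes f g h :: "int \<Rightarrow> 'a :: comm_semiring_1"
  shows "(\<Sum>P\<in>PiE {1..n} (\<lambda>_. S3). f (total_spin P n 2) * g (total_spin P n 1) * h (total_spin P n 3)) =
    trinomial_sum n (\<lambda>a b c. sign_walk_sum f a * sign_walk_sum g b * sign_walk_sum h c)"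
proof (induction n arbitrary: f g h)
  case 0
  show ?case by (simp add: total_spin_def)
next
  case (Suc n)
  define T where "T u v w = trinomial_sum n (\<lambda>a b c. sign_walk_sum (\<lambda>x. f (x + u)) a
      * sign_walk_sum (\<lambda>x. g (x + v)) b * sign_walk_sum (\<lambda>x. h (x + w)) c)" for u v w
  have dom: "{1..Suc n} = insert (Suc n) {1..n}" and not_in: "Suc n \<notin> {1..n}" by auto
  have "(\<Sum>P\<in>PiE {1..Suc n} (\<lambda>_. S3).
        f (total_spin P (Suc n) 2) * g (total_spin P (Suc n) 1) * h (total_spin P (Suc n) 3)) =
      (\<Sum>s\<in>S3. \<Sum>P\<in>PiE {1..n} (\<lambda>_. S3).
        f (total_spin P n 2 + spin s 2) * g (total_spin P n 1 + spin s 1) * h (total_spin P n 3 + spin s 3))"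
    unfolding dom sum_PiE_insert[OF not_in] total_spin_Suc_upd ..
  also have "\<dots> = (\<Sum>s\<in>S3. T (spin s 2) (spin s 1) (spin s 3))"
    unfolding T_def by (intro sum.cong refl Suc.IH)
  also have "\<dots> = T 1 0 0 + T (-1) 0 0 + T 0 1 0 + T 0 (-1) 0 + T 0 0 1 + T 0 0 (-1)"
    by (rule sum_S3_spin)
  also have "\<dots> = trinomial_sum (Suc n) (\<lambda>a b c. sign_walk_sum f a * sign_walk_sum g b * sign_walk_sum h c)"
    by (simp add: T_def trinomial_sum_Suc sign_walk_sum_Suc ring_distribs trinomial_sum_add add_ac)
  finally show ?case .
qed

lemma sign_walk_sum_powr_eq_G:
  "sign_walk_sum (\<lambda>y. x powr ((real_of_int y + l)^2)) m = G m l x"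
  unfolding sign_walk_sum_def G_def atLeast0AtMost[symmetric]
  by (intro sum.cong refl) simp

lemma trinomial_sum_eq_multinom3:
  fixes h :: "nat \<Rightarrow> nat \<Rightarrow> nat \<Rightarrow> real"
  shows "trinomial_sum n h = (\<Sum>(a,b,c) \<in> {(a,b,c). a + b + c = n}. multinom3 n a b c * h a b c)"
proof -
  define D where "D = (SIGMA a:{..n}. {..n - a})"
  let ?split = "\<lambda>(a,b). (a, b, n - a - b)"
  have "{(a,b,c). a + b + c = n} = ?split ` D"
    by (auto simp: D_def image_iff intro!: bexI[of _ "(a, b)" for a b])
  moreover have "inj_on ?split D"
    by (auto simp: inj_on_def)
  ultimately have "(\<Sum>(a,b,c) \<in> {(a,b,c). a + b + c = n}. multinom3 n a b c * h a b c) =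
      (\<Sum>(a,b)\<in>D. multinom3 n a b (n - a - b) * h a b (n - a - b))"
    by (simp add: sum.reindex case_prod_unfold)
  also have "\<dots> = (\<Sum>(a,b)\<in>D. real (n choose a) * (real ((n - a) choose b) * h a b (n - a - b)))"
    by (intro sum.cong refl) (auto simp: D_def multinom3_def binomial_fact field_simps)
  also have "\<dots> = trinomial_sum n h"
    by (simp add: trinomial_sum_def D_def sum.Sigma sum_distrib_left)
  finally show ?thesis ..
qed

theorem theorem8:
  fixes n q :: nat and \<beta> J H :: real
  assumes "n \<ge> 2" and "q \<ge> 1" and "\<beta> > 0" and "J > 0"
  shows "Z n q J H \<beta> =
    exp (- (\<beta> / 2) * (real n * real q * J / (real n - 1) + H^2 * (real n - 1) / (real q * J)))
    * (\<Sum>(a,b,c) \<in> {(a,b,c). a + b + c = n}.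
         multinom3 n a b c
         * G a (H * (real n - 1) / (real q * J)) (exp (\<beta> * real q * J / (2 * (real n - 1))))
         * G b 0 (exp (\<beta> * real q * J / (2 * (real n - 1))))
         * G c 0 (exp (\<beta> * real q * J / (2 * (real n - 1)))))"
proof -
  define c0 where "c0 = - (\<beta> / 2) * (real n * real q * J / (real n - 1) + H^2 * (real n - 1) / (real q * J))"
  define x where "x = exp (\<beta> * real q * J / (2 * (real n - 1)))"
  define l where "l = H * (real n - 1) / (real q * J)"
  define f :: "int \<Rightarrow> real" where "f = (\<lambda>y. x powr ((real_of_int y + l)^2))"
  define g :: "int \<Rightarrow> real" where "g = (\<lambda>y. x powr ((real_of_int y)^2))"
  have "Z n q J H \<beta> = (\<Sum>P\<in>PiE {1..n} (\<lambda>_. S3).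
      exp c0 * (f (total_spin P n 2) * g (total_spin P n 1) * g (total_spin P n 3)))"
    unfolding Z_def c0_def x_def l_def f_def g_def
    by (intro sum.cong refl exp_neg_beta_H_mean) (use assms in auto)
  also have "\<dots> = exp c0 * trinomial_sum n (\<lambda>a b c. sign_walk_sum f a * sign_walk_sum g b * sign_walk_sum g c)"
    by (simp only: sum_distrib_left[symmetric] sum_PiE_S3_total_spin)
  also have "\<dots> = exp c0 * trinomial_sum n (\<lambda>a b c. G a l x * G b 0 x * G c 0 x)"
    using sign_walk_sum_powr_eq_G[of x l] sign_walk_sum_powr_eq_G[of x 0] by (simp add: f_def g_def)
  finally show ?thesis
    by (simp add: trinomial_sum_eq_multinom3 mult.assoc c0_def x_def l_def)
qed

end
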